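(* For any $\xi>0$ and $\epsilon>0$, there exists an $\epsilon$-differentially private (central model) $\left(1+\xi,\ O_\xi\!\left(\frac{m^4}{\epsilon n}\right)\right)$-approximation algorithm for the rank aggregation problem, i.e., one whose additive error is at most $C_\xi \frac{m^4}{\epsilon n}$ for a constant $C_\xi$ depending only on $\xi$.
   Context: Items are $[m]=\{1,\dots,m\}$; $\mathbb{S}_m$ is the set of rankings (permutations) of $[m]$, $\pi(j)$ being the position of item $j$. The Kendall tau distance is $K(\pi_1,\pi_2)=|\{(i,j):\pi_1(i)<\pi_1(j),\ \pi_2(i)>\pi_2(j)\}|$. An input is a list $\Pi=\{\pi_1,\dots,\pi_n\}$ of $n$ rankings. Define $\bar K(\sigma,\Pi)=\frac1n\sum_k K(\sigma,\pi_k)$ and $\mathrm{OPT}(\Pi)=\min_\sigma\bar K(\sigma,\Pi)$. A randomized algorithm is an $(\alpha,\beta)$-approximation algorithm for rank aggregation if for every input $\Pi$ its output $\sigma$ satisfies $\mathbb{E}[\bar K(\sigma,\Pi)]\le\alpha\,\mathrm{OPT}(\Pi)+\beta$. Two inputs are neighboring if they differ in a single ranking; an algorithm $\mathcal{M}$ is $\epsilon$-DP (central model) if for all neighboring $\Pi,\Pi'$ and all output sets $S$, $\Pr[\mathcal{M}(\Pi)\in S]\le e^{\epsilon}\Pr[\mathcal{M}(\Pi')\in S]$. *)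

theory Defs
  imports "HOL-Probability.Probability" "HOL-Combinatorics.Permutations"
begin

type_synonym ranking = "nat \<Rightarrow> nat"

text \<open>Rankings of [m] = {1..m}: pi j is the position of item j.\<close>
definition rankings :: "nat \<Rightarrow> ranking set" where
  "rankings m = {\<pi>. \<pi> permutes {1..m}}"

definition kendall :: "nat \<Rightarrow> ranking \<Rightarrow> ranking \<Rightarrow> nat" where
  "kendall m \<pi>1 \<pi>2 = card {(i, j). i \<in> {1..m} \<and> j \<in> {1..m} \<and> \<pi>1 i < \<pi>1 j \<and> \<pi>2 i > \<pi>2 j}"

definition avg_kendall :: "nat \<Rightarrow> ranking \<Rightarrow> ranking list \<Rightarrow> real" where
  "avg_kendall m \<sigma> P = (\<Sum>k<length P. real (kendall m \<sigma> (P ! k))) / real (length P)"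

definition OPT :: "nat \<Rightarrow> ranking list \<Rightarrow> real" where
  "OPT m P = Min ((\<lambda>\<sigma>. avg_kendall m \<sigma> P) ` rankings m)"

definition valid_input :: "nat \<Rightarrow> ranking list \<Rightarrow> bool" where
  "valid_input m P \<longleftrightarrow> length P \<ge> 1 \<and> (\<forall>\<pi>\<in>set P. \<pi> \<in> rankings m)"

definition neighboring :: "ranking list \<Rightarrow> ranking list \<Rightarrow> bool" where
  "neighboring P P' \<longleftrightarrow> length P = length P' \<and>
     (\<exists>k<length P. \<forall>l<length P. l \<noteq> k \<longrightarrow> P ! l = P' ! l)"

definition differentially_private ::
  "real \<Rightarrow> (nat \<Rightarrow> ranking list \<Rightarrow> ranking pmf) \<Rightarrow> bool" where
  "differentially_private \<epsilon> M \<longleftrightarrow>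
     (\<forall>m P P' S. valid_input m P \<and> valid_input m P' \<and> neighboring P P' \<longrightarrow>
        measure_pmf.prob (M m P) S \<le> exp \<epsilon> * measure_pmf.prob (M m P') S)"

definition approx_algorithm ::
  "real \<Rightarrow> (nat \<Rightarrow> nat \<Rightarrow> real) \<Rightarrow> (nat \<Rightarrow> ranking list \<Rightarrow> ranking pmf) \<Rightarrow> bool" where
  "approx_algorithm \<alpha> \<beta> M \<longleftrightarrow>
     (\<forall>m P. valid_input m P \<longrightarrow>
        set_pmf (M m P) \<subseteq> rankings m \<and>
        measure_pmf.expectation (M m P) (\<lambda>\<sigma>. avg_kendall m \<sigma> P)
          \<le> \<alpha> * OPT m P + \<beta> m (length P))"

end

theory Submission
  imports Defs
begin

text \<open>The algorithm is the exponential mechanism: it samples a ranking \<open>\<sigma>\<close> with probability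
  proportional to \<open>exp (-\<beta> * K(\<sigma>, P))\<close>, where \<open>K(\<sigma>, P)\<close> is the average Kendall tau distance.
  Replacing one of the \<open>n\<close> input rankings changes \<open>K(\<sigma>, P)\<close> by at most \<open>m\<^sup>2 / n\<close>, so every
  probability changes by a factor at most \<open>exp (2 \<beta> m\<^sup>2 / n)\<close>, which is \<open>exp \<epsilon>\<close> for
  \<open>\<beta> = \<epsilon> n / (2 (m\<^sup>2 + 1))\<close>. For utility, a Gibbs distribution on a set of size at most
  \<open>exp L\<close> has expected score at most the minimum plus \<open>2 L / \<beta>\<close>, because \<open>y exp (-y)\<close> decreases
  for \<open>y \<ge> 1\<close>. With \<open>m! \<le> exp (m\<^sup>2)\<close> and \<open>L = m\<^sup>2 + 1\<close> this gives expected cost at most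
  \<open>OPT + 4 (m\<^sup>2 + 1)\<^sup>2 / (\<epsilon> n) \<le> OPT + 16 m\<^sup>4 / (\<epsilon> n)\<close>, so the mechanism even achieves
  approximation factor 1.\<close>

lemma mult_exp_neg_antimono:
  fixes a b :: real
  assumes "1 \<le> a" "a \<le> b"
  shows "b * exp (-b) \<le> a * exp (-a)"
proof -
  have "b / a = 1 + (b - a) / a" using assms by (simp add: field_simps)
  also have "\<dots> \<le> 1 + (b - a)" using assms by (simp add: divide_le_eq mult_le_cancel_left1)
  also have "\<dots> \<le> exp (b - a)" by (rule exp_ge_add_one_self)
  finally have "b \<le> a * exp (b - a)" using assms by (simp add: divide_le_eq mult.commute)
  then have "b * exp (-b) \<le> a * exp (b - a) * exp (-b)" by (simp add: mult_right_mono)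
  also have "\<dots> = a * exp (-a)" by (simp add: mult.assoc flip: exp_add)
  finally show ?thesis .
qed

lemma measure_pmf_le_if_pmf_le:
  assumes "\<And>x. pmf p x \<le> c * pmf q x"
  shows "measure_pmf.prob p A \<le> c * measure_pmf.prob q A"
proof -
  have "measure_pmf.prob p A \<le> infsetsum (\<lambda>x. c * pmf q x) A"
    unfolding measure_pmf_conv_infsetsum by (rule infsetsum_mono) (auto intro: assms)
  also have "\<dots> = c * measure_pmf.prob q A"
    by (subst infsetsum_cmult_right) (auto simp: measure_pmf_conv_infsetsum)
  finally show ?thesis .
qed

definition exp_mech :: "'a set \<Rightarrow> real \<Rightarrow> ('a \<Rightarrow> real) \<Rightarrow> 'a pmf" where
  "exp_mech R \<beta> u =
     embed_pmf (\<lambda>x. if x \<in> R then exp (-\<beta> * u x) / (\<Sum>y\<in>R. exp (-\<beta> * u y)) else 0)"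

lemma exp_mech_shift: "exp_mech R \<beta> (\<lambda>x. u x + c) = exp_mech R \<beta> u"
proof -
  have shift: "exp (-\<beta> * (u x + c)) = exp (-\<beta> * c) * exp (-\<beta> * u x)" for x
    by (simp add: algebra_simps flip: exp_add)
  show ?thesis
    unfolding exp_mech_def shift sum_distrib_left[symmetric]
    by (intro arg_cong[where f = embed_pmf] ext) simp
qed

context
  fixes R :: "'a set"
  assumes finite: "finite R" and nonempty: "R \<noteq> {}"
begin

lemma exp_mech_weight_sum_pos: "(\<Sum>y\<in>R. exp (-\<beta> * u y :: real)) > 0"
  using finite nonempty by (intro sum_pos) auto

lemma pmf_exp_mech:
  "pmf (exp_mech R \<beta> u) x = (if x \<in> R then exp (-\<beta> * u x) / (\<Sum>y\<in>R. exp (-\<beta> * u y)) else 0)"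
  unfolding exp_mech_def
proof (rule pmf_embed_pmf)
  let ?Z = "\<Sum>y\<in>R. exp (-\<beta> * u y)"
  have Z: "?Z > 0" by (rule exp_mech_weight_sum_pos)
  then show "0 \<le> (if x \<in> R then exp (-\<beta> * u x) / ?Z else 0)" for x
    by simp
  have "(\<integral>\<^sup>+x. ennreal (if x \<in> R then exp (-\<beta> * u x) / ?Z else 0) \<partial>count_space UNIV)
      = (\<Sum>x\<in>R. ennreal (exp (-\<beta> * u x) / ?Z))"
    by (subst nn_integral_count_space_finite[OF finite, symmetric],
        subst nn_integral_count_space_indicator) (auto intro!: nn_integral_cong split: split_indicator)
  also have "\<dots> = ennreal (\<Sum>x\<in>R. exp (-\<beta> * u x) / ?Z)"
    using Z by (simp add: sum_ennreal)
  also have "(\<Sum>x\<in>R. exp (-\<beta> * u x) / ?Z) = 1"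
    using Z by (simp flip: sum_divide_distrib)
  finally show "(\<integral>\<^sup>+x. ennreal (if x \<in> R then exp (-\<beta> * u x) / ?Z else 0) \<partial>count_space UNIV) = 1"
    by simp
qed

lemma set_pmf_exp_mech: "set_pmf (exp_mech R \<beta> u) = R"
  using exp_mech_weight_sum_pos[of \<beta> u] by (auto simp: set_pmf_eq pmf_exp_mech)

lemma expectation_exp_mech:
  "measure_pmf.expectation (exp_mech R \<beta> u) f
     = (\<Sum>x\<in>R. f x * exp (-\<beta> * u x)) / (\<Sum>x\<in>R. exp (-\<beta> * u x))"
  by (subst integral_measure_pmf_real[OF finite])
     (auto simp: set_pmf_exp_mech pmf_exp_mech sum_divide_distrib)

lemma pmf_exp_mech_le:
  assumes \<beta>: "\<beta> \<ge> 0" and close: "\<And>x. x \<in> R \<Longrightarrow> \<bar>u x - v x\<bar> \<le> \<Delta>"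
  shows "pmf (exp_mech R \<beta> u) x \<le> exp (2 * \<beta> * \<Delta>) * pmf (exp_mech R \<beta> v) x"
proof (cases "x \<in> R")
  case True
  have weight_le: "exp (-\<beta> * w x) \<le> exp (\<beta> * \<Delta>) * exp (-\<beta> * w' x)"
    if "\<And>x. x \<in> R \<Longrightarrow> \<bar>w x - w' x\<bar> \<le> \<Delta>" and "x \<in> R" for w w' x
  proof -
    have "\<beta> * (w' x - w x) \<le> \<beta> * \<Delta>"
      using that \<beta> by (intro mult_left_mono) (auto simp: abs_le_iff)
    then show ?thesis by (simp add: algebra_simps flip: exp_add)
  qed
  define Zu where "Zu = (\<Sum>y\<in>R. exp (-\<beta> * u y))"
  define Zv where "Zv = (\<Sum>y\<in>R. exp (-\<beta> * v y))"
  have Z: "Zu > 0" "Zv > 0"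
    unfolding Zu_def Zv_def by (rule exp_mech_weight_sum_pos)+
  have "Zv \<le> exp (\<beta> * \<Delta>) * Zu"
    unfolding Zu_def Zv_def sum_distrib_left
    by (rule sum_mono, rule weight_le) (use close in \<open>auto simp: abs_minus_commute\<close>)
  then have "exp (-\<beta> * u x) / Zu \<le> exp (\<beta> * \<Delta>) * exp (-\<beta> * v x) / (Zv / exp (\<beta> * \<Delta>))"
    using weight_le[OF close True] Z by (intro frac_le) (auto simp: field_simps)
  also have "\<dots> = exp (2 * \<beta> * \<Delta>) * (exp (-\<beta> * v x) / Zv)"
    by (simp add: field_simps flip: exp_add)
  finally show ?thesis
    using True by (simp add: pmf_exp_mech Zu_def Zv_def)
qed (simp add: pmf_exp_mech)

lemma prob_exp_mech_le:
  assumes "\<beta> \<ge> 0" and "\<And>x. x \<in> R \<Longrightarrow> \<bar>u x - v x\<bar> \<le> \<Delta>"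
  shows "measure_pmf.prob (exp_mech R \<beta> u) A \<le> exp (2 * \<beta> * \<Delta>) * measure_pmf.prob (exp_mech R \<beta> v) A"
  by (intro measure_pmf_le_if_pmf_le pmf_exp_mech_le assms)

lemma expectation_exp_mech_le_of_nonpos:
  assumes nonpos: "x\<^sub>0 \<in> R" "g x\<^sub>0 \<le> 0"
    and \<beta>: "\<beta> > 0" and L: "L \<ge> 1" and card: "real (card R) \<le> exp L"
  shows "measure_pmf.expectation (exp_mech R \<beta> g) g \<le> 2 * L / \<beta>"
proof -
  define t where "t = L / \<beta>"
  define Z where "Z = (\<Sum>x\<in>R. exp (-\<beta> * g x))"
  have t: "t \<ge> 0" using \<beta> L by (simp add: t_def)
  have "1 \<le> exp (-\<beta> * g x\<^sub>0)"
    using \<beta> nonpos by (simp add: mult_nonneg_nonpos)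
  also have "\<dots> \<le> Z"
    unfolding Z_def using finite nonpos by (intro member_le_sum) auto
  finally have Z: "Z \<ge> 1" .
  \<comment> \<open>Points with \<open>g x \<le> t\<close> contribute at most \<open>t\<close> times their weight; since \<open>y exp (-y)\<close>
      decreases for \<open>y \<ge> 1\<close>, each of the others contributes at most \<open>t exp (-L)\<close>.\<close>
  have pointwise: "g x * exp (-\<beta> * g x) \<le> t * exp (-\<beta> * g x) + t * exp (-L)" for x
  proof (cases "g x \<le> t")
    case True
    then show ?thesis using t by (simp add: mult_right_mono add_increasing2)
  next
    case False
    have "(\<beta> * g x) * exp (-(\<beta> * g x)) \<le> L * exp (-L)"
      using L False \<beta> by (intro mult_exp_neg_antimono) (auto simp: t_def field_simps)
    then have "g x * exp (-\<beta> * g x) \<le> t * exp (-L)"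
      using \<beta> by (simp add: t_def field_simps)
    then show ?thesis using t by (simp add: add_increasing)
  qed
  have "(\<Sum>x\<in>R. g x * exp (-\<beta> * g x)) \<le> (\<Sum>x\<in>R. t * exp (-\<beta> * g x) + t * exp (-L))"
    by (intro sum_mono pointwise)
  also have "\<dots> = t * Z + t * (real (card R) * exp (-L))"
    by (simp add: sum.distrib Z_def sum_distrib_left)
  also have "\<dots> \<le> t * Z + t * (exp L * exp (-L))"
    using card t by (simp add: mult_left_mono)
  also have "\<dots> \<le> 2 * t * Z"
    using mult_left_mono[OF Z t] by (simp add: exp_minus_inverse mult.commute)
  finally show ?thesis
    using Z by (simp add: expectation_exp_mech Z_def t_def divide_le_eq)
qed

lemma expectation_exp_mech_le:
  assumes \<beta>: "\<beta> > 0" and L: "L \<ge> 1" and card: "real (card R) \<le> exp L"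
  shows "measure_pmf.expectation (exp_mech R \<beta> u) u \<le> Min (u ` R) + 2 * L / \<beta>"
proof -
  define c where "c = Min (u ` R)"
  define g where "g x = u x - c" for x
  have "c \<in> u ` R"
    unfolding c_def using finite nonempty by (intro Min_in) auto
  then obtain x\<^sub>0 where x\<^sub>0: "x\<^sub>0 \<in> R" "u x\<^sub>0 = c" by blast
  have "exp_mech R \<beta> u = exp_mech R \<beta> g"
    using exp_mech_shift[of R \<beta> g c] by (simp add: g_def)
  then have "measure_pmf.expectation (exp_mech R \<beta> u) u
      = measure_pmf.expectation (exp_mech R \<beta> g) (\<lambda>x. g x + c)"
    by (simp add: g_def)
  also have "\<dots> = measure_pmf.expectation (exp_mech R \<beta> g) g + c"
    by (simp add: integrable_measure_pmf_finite set_pmf_exp_mech finite)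
  also have "measure_pmf.expectation (exp_mech R \<beta> g) g \<le> 2 * L / \<beta>"
    using finite x\<^sub>0 \<beta> L card
    by (intro expectation_exp_mech_le_of_nonpos[of x\<^sub>0]) (auto simp: g_def)
  finally show ?thesis by (simp add: c_def)
qed

end

lemma finite_rankings: "finite (rankings m)"
  unfolding rankings_def by (rule finite_permutations) simp

lemma rankings_nonempty: "rankings m \<noteq> {}"
  unfolding rankings_def using permutes_id by blast

lemma card_rankings_le_exp: "real (card (rankings m)) \<le> exp (real m ^ 2)"
proof -
  have "real (card (rankings m)) = fact m"
    unfolding rankings_def by (simp add: card_permutations)
  also have "\<dots> \<le> real m ^ m"
    using fact_le_power[of m] by simp
  also have "\<dots> \<le> exp (real m) ^ m"
    by (intro power_mono) (use exp_ge_add_one_self[of "real m"] in linarith, simp)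
  also have "\<dots> = exp (real m ^ 2)"
    by (simp add: power2_eq_square flip: exp_of_nat_mult)
  finally show ?thesis .
qed

lemma kendall_le_square: "kendall m \<sigma> \<pi> \<le> m ^ 2"
proof -
  have "kendall m \<sigma> \<pi> \<le> card ({1..m} \<times> {1..m})"
    unfolding kendall_def by (rule card_mono) auto
  then show ?thesis by (simp add: power2_eq_square)
qed

lemma avg_kendall_nonneg: "avg_kendall m \<sigma> P \<ge> 0"
  unfolding avg_kendall_def by (intro divide_nonneg_nonneg sum_nonneg) auto

lemma OPT_nonneg: "OPT m P \<ge> 0"
proof -
  have "OPT m P \<in> (\<lambda>\<sigma>. avg_kendall m \<sigma> P) ` rankings m"
    unfolding OPT_def using finite_rankings rankings_nonempty by (intro Min_in) auto
  then show ?thesis using avg_kendall_nonneg by auto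
qed

lemma avg_kendall_neighboring:
  assumes "neighboring P P'"
  shows "\<bar>avg_kendall m \<sigma> P - avg_kendall m \<sigma> P'\<bar> \<le> real m ^ 2 / real (length P)"
proof -
  from assms obtain k where k: "k < length P" and len: "length P = length P'"
    and same: "\<And>l. l < length P \<Longrightarrow> l \<noteq> k \<Longrightarrow> P ! l = P' ! l"
    unfolding neighboring_def by blast
  define d where "d l = real (kendall m \<sigma> (P ! l)) - real (kendall m \<sigma> (P' ! l))" for l
  have "(\<Sum>l\<in>{..<length P} - {k}. d l) = 0"
    using same by (intro sum.neutral) (auto simp: d_def)
  then have sum_d: "(\<Sum>l<length P. d l) = d k"
    using k by (simp add: sum.remove)
  have "real (kendall m \<sigma> \<pi>) \<le> real m ^ 2" for \<pi>
    using kendall_le_square[of m \<sigma> \<pi>] by (simp only: of_nat_power[symmetric] of_nat_le_iff)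
  then have bound: "\<bar>d k\<bar> \<le> real m ^ 2"
    unfolding d_def by (smt (verit) of_nat_0_le_iff)
  have "avg_kendall m \<sigma> P - avg_kendall m \<sigma> P' = (\<Sum>l<length P. d l) / real (length P)"
    using len by (simp add: avg_kendall_def d_def sum_subtractf diff_divide_distrib)
  then have "\<bar>avg_kendall m \<sigma> P - avg_kendall m \<sigma> P'\<bar> = \<bar>d k\<bar> / real (length P)"
    by (simp add: sum_d abs_divide)
  also have "\<dots> \<le> real m ^ 2 / real (length P)"
    using bound by (rule divide_right_mono) simp
  finally show ?thesis .
qed

text \<open>The \<open>+ 1\<close> in the temperature avoids a zero denominator for \<open>m = 0\<close> and supplies the
  bound \<open>L = m\<^sup>2 + 1 \<ge> 1\<close> needed for the utility estimate.\<close>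

definition rank_mech :: "real \<Rightarrow> nat \<Rightarrow> ranking list \<Rightarrow> ranking pmf" where
  "rank_mech \<epsilon> m P =
     exp_mech (rankings m) (\<epsilon> * real (length P) / (2 * (real m ^ 2 + 1))) (\<lambda>\<sigma>. avg_kendall m \<sigma> P)"

lemma rank_mech_differentially_private:
  assumes "\<epsilon> > 0"
  shows "differentially_private \<epsilon> (rank_mech \<epsilon>)"
  unfolding differentially_private_def
proof (intro allI impI)
  fix m P P' S
  assume "valid_input m P \<and> valid_input m P' \<and> neighboring P P'"
  then have nb: "neighboring P P'" and n: "length P \<ge> 1"
    by (auto simp: valid_input_def)
  then have len: "length P' = length P"
    by (simp add: neighboring_def)
  define \<beta> where "\<beta> = \<epsilon> * real (length P) / (2 * (real m ^ 2 + 1))"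
  define \<Delta> where "\<Delta> = real m ^ 2 / real (length P)"
  have \<beta>: "\<beta> \<ge> 0"
    using assms by (simp add: \<beta>_def)
  have "real (length P) > 0" "real m ^ 2 + 1 > 0"
    using n by (auto intro: add_nonneg_pos)
  then have "2 * \<beta> * \<Delta> = \<epsilon> * (real m ^ 2 / (real m ^ 2 + 1))"
    by (simp add: \<beta>_def \<Delta>_def field_simps)
  also have "\<dots> \<le> \<epsilon>"
    using assms by (intro mult_left_le) (auto simp: divide_le_eq_1 intro: add_nonneg_pos)
  finally have "exp (2 * \<beta> * \<Delta>) \<le> exp \<epsilon>" by simp
  moreover have "measure_pmf.prob (rank_mech \<epsilon> m P) S \<le> exp (2 * \<beta> * \<Delta>) * measure_pmf.prob (rank_mech \<epsilon> m P') S"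
    unfolding rank_mech_def len \<beta>_def[symmetric]
    using finite_rankings rankings_nonempty \<beta> avg_kendall_neighboring[OF nb]
    by (intro prob_exp_mech_le) (auto simp: \<Delta>_def)
  ultimately show "measure_pmf.prob (rank_mech \<epsilon> m P) S \<le> exp \<epsilon> * measure_pmf.prob (rank_mech \<epsilon> m P') S"
    by (meson measure_nonneg mult_right_mono order_trans)
qed

lemma rank_mech_expectation_le:
  assumes "\<epsilon> > 0" and "length P \<ge> 1"
  shows "measure_pmf.expectation (rank_mech \<epsilon> m P) (\<lambda>\<sigma>. avg_kendall m \<sigma> P)
     \<le> OPT m P + 4 * (real m ^ 2 + 1) ^ 2 / (\<epsilon> * real (length P))"
proof -
  define \<beta> where "\<beta> = \<epsilon> * real (length P) / (2 * (real m ^ 2 + 1))"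
  have \<beta>: "\<beta> > 0"
    using assms unfolding \<beta>_def by (intro divide_pos_pos mult_pos_pos) (auto intro: add_nonneg_pos)
  have card: "real (card (rankings m)) \<le> exp (real m ^ 2 + 1)"
    using card_rankings_le_exp[of m] by (rule order_trans) simp
  have "measure_pmf.expectation (rank_mech \<epsilon> m P) (\<lambda>\<sigma>. avg_kendall m \<sigma> P)
      \<le> OPT m P + 2 * (real m ^ 2 + 1) / \<beta>"
    unfolding rank_mech_def OPT_def \<beta>_def[symmetric]
    using finite_rankings rankings_nonempty \<beta> card by (intro expectation_exp_mech_le) auto
  also have "2 * (real m ^ 2 + 1) / \<beta> = 4 * (real m ^ 2 + 1) ^ 2 / (\<epsilon> * real (length P))"
    using assms by (simp add: \<beta>_def field_simps power2_eq_square)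
  finally show ?thesis .
qed

lemma rank_mech_approx_algorithm:
  assumes "\<epsilon> > 0" and "\<alpha> \<ge> 1"
  shows "approx_algorithm \<alpha> (\<lambda>m n. 16 * real m ^ 4 / (\<epsilon> * real n)) (rank_mech \<epsilon>)"
  unfolding approx_algorithm_def
proof (intro allI impI conjI)
  fix m P
  assume "valid_input m P"
  then have n: "length P \<ge> 1" by (simp add: valid_input_def)
  show "set_pmf (rank_mech \<epsilon> m P) \<subseteq> rankings m"
    unfolding rank_mech_def using finite_rankings rankings_nonempty by (subst set_pmf_exp_mech) auto
  have OPT: "OPT m P \<le> \<alpha> * OPT m P"
    using OPT_nonneg[of m P] assms(2) by (simp add: mult_le_cancel_right1)
  show "measure_pmf.expectation (rank_mech \<epsilon> m P) (\<lambda>\<sigma>. avg_kendall m \<sigma> P)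
      \<le> \<alpha> * OPT m P + 16 * real m ^ 4 / (\<epsilon> * real (length P))"
  proof (cases "m = 0")
    case True
    \<comment> \<open>Here \<open>4 (m\<^sup>2 + 1)\<^sup>2 > 16 m\<^sup>4\<close>, but all Kendall distances vanish.\<close>
    then have "(\<lambda>\<sigma>. avg_kendall m \<sigma> P) = (\<lambda>_. 0)"
      by (simp add: avg_kendall_def kendall_def)
    then show ?thesis
      using OPT OPT_nonneg[of m P] assms(1) by simp
  next
    case False
    then have "(real m ^ 2 + 1) ^ 2 \<le> (2 * real m ^ 2) ^ 2"
      by (intro power_mono) auto
    then have "4 * (real m ^ 2 + 1) ^ 2 / (\<epsilon> * real (length P)) \<le> 16 * real m ^ 4 / (\<epsilon> * real (length P))"
      using assms(1) n by (intro divide_right_mono) (auto simp: power_mult_distrib)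
    then show ?thesis
      using rank_mech_expectation_le[OF assms(1) n, of m] OPT by linarith
  qed
qed

theorem corollary1:
  shows "\<forall>\<xi>::real. \<xi> > 0 \<longrightarrow> (\<exists>C::real. \<forall>\<epsilon>::real. \<epsilon> > 0 \<longrightarrow>
     (\<exists>M. differentially_private \<epsilon> M \<and>
          approx_algorithm (1 + \<xi>) (\<lambda>m n. C * real m ^ 4 / (\<epsilon> * real n)) M))"
proof (intro allI impI)
  fix \<xi> :: real
  assume "\<xi> > 0"
  then have "differentially_private \<epsilon> (rank_mech \<epsilon>) \<and>
      approx_algorithm (1 + \<xi>) (\<lambda>m n. 16 * real m ^ 4 / (\<epsilon> * real n)) (rank_mech \<epsilon>)"
    if "\<epsilon> > 0" for \<epsilon>
    using that by (simp add: rank_mech_differentially_private rank_mech_approx_algorithm)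
  then show "\<exists>C::real. \<forall>\<epsilon>::real. \<epsilon> > 0 \<longrightarrow> (\<exists>M. differentially_private \<epsilon> M \<and>
      approx_algorithm (1 + \<xi>) (\<lambda>m n. C * real m ^ 4 / (\<epsilon> * real n)) M)"
    by blast
qed

end
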